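(* Let $\Gamma$ be an environment as in the context and let $c_1,c_2,c_1',c_2'$ be finite sets of constraints with $(c_1,c_2)\longrightarrow_\Gamma^* (c_1',c_2')$. Then: (i) for every $x\in\mathrm{dom}(\phi_\ell(c_1'\cup c_2'))$ there exists a recipe $R$ with $\mathrm{vars}(R)\subseteq \mathrm{dom}(\phi^\Gamma_{\mathtt{LL}}\cup\phi_\ell(c_1\cup c_2))$ such that $\phi_\ell(c_1'\cup c_2')(x) = (R(\phi^\Gamma_{\mathtt{LL}}\cup\phi_\ell(c_1\cup c_2)))\downarrow$ and $\phi_r(c_1'\cup c_2')(x) = (R(\phi^\Gamma_{\mathtt{LL}}\cup\phi_r(c_1\cup c_2)))\downarrow$; (ii) conversely, for every $x\in\mathrm{dom}(\phi_\ell(c_1\cup c_2))$ there exists a recipe $R$ in which none of the symbols $\mathtt{dec},\mathtt{adec},\mathtt{checksign},\pi_1,\pi_2$ occurs, with $\mathrm{vars}(R)\subseteq \mathrm{dom}(\phi^\Gamma_{\mathtt{LL}}\cup\phi_\ell(c_1'\cup c_2'))$, such that $\phi_\ell(c_1\cup c_2)(x) = R(\phi^\Gamma_{\mathtt{LL}}\cup\phi_\ell(c_1'\cup c_2'))$ and $\phi_r(c_1\cup c_2)(x) = R(\phi^\Gamma_{\mathtt{LL}}\cup\phi_r(c_1'\cup c_2'))$.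
   Context: Fix disjoint infinite sets: names $\mathcal{N}=\mathcal{FN}\uplus\mathcal{BN}$ (free names, usable by the attacker, and bound names), keys $\mathcal{K}$, constants $\mathcal{C}$, variables $\mathcal{V}=\mathcal{X}\uplus\mathcal{AX}$. Constructors are $\mathtt{pk},\mathtt{vk},\mathtt{h}$ (unary) and $\mathtt{enc},\mathtt{aenc},\mathtt{sign},\langle\cdot,\cdot\rangle$ (binary); destructors are $\pi_1,\pi_2$ (unary) and $\mathtt{dec},\mathtt{adec},\mathtt{checksign}$ (binary). Terms are built from these symbols over $\mathcal{N}\cup\mathcal{K}\cup\mathcal{C}\cup\mathcal{V}$. A message is a term using only constructors, constants, names, keys and variables, such that every subterm $\mathtt{pk}(t'),\mathtt{vk}(t'),\mathtt{enc}(t_1,t'),\mathtt{sign}(t_1,t')$ has $t'\in\mathcal{K}$ and every subterm $\mathtt{aenc}(t_1,t_2)$ has $t_2=\mathtt{pk}(k)$ with $k\in\mathcal{K}$. The evaluation $t\downarrow$ (a term or the failure value $\bot$) is: $u\downarrow=u$ for $u\in\mathcal{N}\cup\mathcal{V}\cup\mathcal{K}\cup\mathcal{C}$; $\mathtt{pk}(t)\downarrow=\mathtt{pk}(t\downarrow)$ and $\mathtt{vk}(t)\downarrow=\mathtt{vk}(t\downarrow)$ if $t\downarrow\in\mathcal{K}$; $\mathtt{h}(t)\downarrow=\mathtt{h}(t\downarrow)$ if $t\downarrow\neq\bot$; $\langle t_1,t_2\rangle\downarrow=\langle t_1\downarrow,t_2\downarrow\rangle$ if both are $\neq\bot$; $\mathtt{enc}(t_1,t_2)\downarrow=\mathtt{enc}(t_1\downarrow,t_2\downarrow)$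 and $\mathtt{sign}(t_1,t_2)\downarrow=\mathtt{sign}(t_1\downarrow,t_2\downarrow)$ if $t_1\downarrow\neq\bot$ and $t_2\downarrow\in\mathcal{K}$; $\mathtt{aenc}(t_1,t_2)\downarrow=\mathtt{aenc}(t_1\downarrow,t_2\downarrow)$ if $t_1\downarrow\neq\bot$ and $t_2\downarrow=\mathtt{pk}(k)$ for some $k\in\mathcal{K}$; $\pi_1(t)\downarrow=t_1$ and $\pi_2(t)\downarrow=t_2$ if $t\downarrow=\langle t_1,t_2\rangle$; $\mathtt{dec}(t_1,t_2)\downarrow=t_3$ if $t_1\downarrow=\mathtt{enc}(t_3,t_4)$ and $t_4=t_2\downarrow$; $\mathtt{adec}(t_1,t_2)\downarrow=t_3$ if $t_1\downarrow=\mathtt{aenc}(t_3,\mathtt{pk}(t_4))$ and $t_4=t_2\downarrow$; $\mathtt{checksign}(t_1,t_2)\downarrow=t_3$ if $t_1\downarrow=\mathtt{sign}(t_3,t_4)$ and $t_2\downarrow=\mathtt{vk}(t_4)$; and $t\downarrow=\bot$ in all other cases. A recipe is a term built from constructors, destructors, constants and names in $\mathcal{FN}$ over variables in $\mathcal{AX}$. A frame is a substitution $\phi$ with $\mathrm{dom}(\phi)\subseteq\mathcal{AX}$; $R(\phi)$ denotes the application of $\phi$ to $R$. The environment $\Gamma$ assigns to finitely many keys $k$ a key type $\mathrm{key}^{l}(T)$ and to finitely many nonces $n$ a nonce type $\tau^{l,a}_n$, with labels $l\in\{\mathtt{LL},\mathtt{HL},\mathtt{HH}\}$ and $a\in\{1,\infty\}$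 (only the labels matter here). $\phi^\Gamma_{\mathtt{LL}}$ is a frame (on fresh variables) whose range consists exactly of: every key $k$ with $\Gamma(k)=\mathrm{key}^{\mathtt{LL}}(T)$ for some $T$; $\mathtt{pk}(k)$ and $\mathtt{vk}(k)$ for every key $k\in\mathrm{dom}(\Gamma)$; every nonce $n$ with $\Gamma(n)=\tau^{\mathtt{LL},a}_n$ for some $a$. A constraint is a pair of messages written $u\sim v$. For a finite set $c$ of constraints, $\phi_\ell(c)$ and $\phi_r(c)$ are frames with a common domain, a set of variables of $\mathcal{AX}$ disjoint from $\mathrm{dom}(\phi^\Gamma_{\mathtt{LL}})$ and in bijection with $c$, such that the variable associated with $u\sim v$ is mapped to $u$ by $\phi_\ell(c)$ and to $v$ by $\phi_r(c)$. The relation $\longrightarrow_\Gamma$ on pairs of sets of constraints is defined by (for all $c,c',M,N,M',N'$): $(\{\langle M,N\rangle\sim\langle M',N'\rangle\}\cup c,c')\longrightarrow_\Gamma(\{M\sim M',N\sim N'\}\cup c,c')$; if $\Gamma(k)=\mathrm{key}^{\mathtt{LL}}(T)$ for some $T$: $(\{\mathtt{enc}(M,k)\sim\mathtt{enc}(M',k)\}\cup c,c')\longrightarrow_\Gamma(\{M\sim M'\}\cup c,c')$, $(\{\mathtt{aenc}(M,\mathtt{pk}(k))\sim\mathtt{aenc}(M',\mathtt{pk}(k))\}\cup c,c')\longrightarrow_\Gamma(\{M\sim M'\}\cup c,c')$ and $(\{\mathtt{sign}(M,k)\sim\mathtt{sign}(M',k)\}\cup c,c')\longrightarrow_\Gamma(\{M\sim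 M'\}\cup c,c')$; if $\Gamma(k)=\mathrm{key}^{\mathtt{HH}}(T)$ for some $T$: $(\{\mathtt{sign}(M,k)\sim\mathtt{sign}(M',k)\}\cup c,c')\longrightarrow_\Gamma(\{M\sim M'\}\cup c,\{\mathtt{sign}(M,k)\sim\mathtt{sign}(M',k)\}\cup c')$. $\longrightarrow_\Gamma^*$ is its reflexive transitive closure. *)

theory Defs
  imports Main
begin

datatype nm = FreeN nat | BoundN nat

datatype trm =
    Nm nm | K nat | Cst nat | Xv nat | AXv nat
  | Pk trm | Vk trm | H trm
  | Enc trm trm | Aenc trm trm | Sign trm trm | Pair trm trm
  | Pi1 trm | Pi2 trm | Dec trm trm | Adec trm trm | Checksign trm trm

fun message :: "trm \<Rightarrow> bool" where
  "message (Nm n) = True"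
| "message (K k) = True"
| "message (Cst c) = True"
| "message (Xv x) = True"
| "message (AXv x) = True"
| "message (Pk t) = (\<exists>k. t = K k)"
| "message (Vk t) = (\<exists>k. t = K k)"
| "message (H t) = message t"
| "message (Enc t1 t2) = (message t1 \<and> (\<exists>k. t2 = K k))"
| "message (Sign t1 t2) = (message t1 \<and> (\<exists>k. t2 = K k))"
| "message (Aenc t1 t2) = (message t1 \<and> (\<exists>k. t2 = Pk (K k)))"
| "message (Pair t1 t2) = (message t1 \<and> message t2)"
| "message (Pi1 t) = False"
| "message (Pi2 t) = False"
| "message (Dec t1 t2) = False"
| "message (Adec t1 t2) = False"
| "message (Checksign t1 t2) = False"

(* evaluation; None stands for the failure value \<bottom> *)
fun eval :: "trm \<Rightarrow> trm option" where
  "eval (Nm n) = Some (Nm n)"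
| "eval (K k) = Some (K k)"
| "eval (Cst c) = Some (Cst c)"
| "eval (Xv x) = Some (Xv x)"
| "eval (AXv x) = Some (AXv x)"
| "eval (Pk t) = (case eval t of Some (K k) \<Rightarrow> Some (Pk (K k)) | _ \<Rightarrow> None)"
| "eval (Vk t) = (case eval t of Some (K k) \<Rightarrow> Some (Vk (K k)) | _ \<Rightarrow> None)"
| "eval (H t) = (case eval t of Some u \<Rightarrow> Some (H u) | None \<Rightarrow> None)"
| "eval (Pair t1 t2) = (case (eval t1, eval t2) of
      (Some u1, Some u2) \<Rightarrow> Some (Pair u1 u2) | _ \<Rightarrow> None)"
| "eval (Enc t1 t2) = (case (eval t1, eval t2) of
      (Some u1, Some (K k)) \<Rightarrow> Some (Enc u1 (K k)) | _ \<Rightarrow> None)"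
| "eval (Sign t1 t2) = (case (eval t1, eval t2) of
      (Some u1, Some (K k)) \<Rightarrow> Some (Sign u1 (K k)) | _ \<Rightarrow> None)"
| "eval (Aenc t1 t2) = (case (eval t1, eval t2) of
      (Some u1, Some (Pk (K k))) \<Rightarrow> Some (Aenc u1 (Pk (K k))) | _ \<Rightarrow> None)"
| "eval (Pi1 t) = (case eval t of Some (Pair u1 u2) \<Rightarrow> Some u1 | _ \<Rightarrow> None)"
| "eval (Pi2 t) = (case eval t of Some (Pair u1 u2) \<Rightarrow> Some u2 | _ \<Rightarrow> None)"
| "eval (Dec t1 t2) = (case (eval t1, eval t2) of
      (Some (Enc t3 t4), Some u2) \<Rightarrow> (if t4 = u2 then Some t3 else None) | _ \<Rightarrow> None)"
| "eval (Adec t1 t2) = (case (eval t1, eval t2) of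
      (Some (Aenc t3 (Pk t4)), Some u2) \<Rightarrow> (if t4 = u2 then Some t3 else None) | _ \<Rightarrow> None)"
| "eval (Checksign t1 t2) = (case (eval t1, eval t2) of
      (Some (Sign t3 t4), Some u2) \<Rightarrow> (if u2 = Vk t4 then Some t3 else None) | _ \<Rightarrow> None)"

fun recipe :: "trm \<Rightarrow> bool" where
  "recipe (Nm n) = (\<exists>i. n = FreeN i)"
| "recipe (K k) = False"
| "recipe (Cst c) = True"
| "recipe (Xv x) = False"
| "recipe (AXv x) = True"
| "recipe (Pk t) = recipe t"
| "recipe (Vk t) = recipe t"
| "recipe (H t) = recipe t"
| "recipe (Enc t1 t2) = (recipe t1 \<and> recipe t2)"
| "recipe (Aenc t1 t2) = (recipe t1 \<and> recipe t2)"
| "recipe (Sign t1 t2) = (recipe t1 \<and> recipe t2)"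
| "recipe (Pair t1 t2) = (recipe t1 \<and> recipe t2)"
| "recipe (Pi1 t) = recipe t"
| "recipe (Pi2 t) = recipe t"
| "recipe (Dec t1 t2) = (recipe t1 \<and> recipe t2)"
| "recipe (Adec t1 t2) = (recipe t1 \<and> recipe t2)"
| "recipe (Checksign t1 t2) = (recipe t1 \<and> recipe t2)"

fun no_destr :: "trm \<Rightarrow> bool" where
  "no_destr (Pk t) = no_destr t"
| "no_destr (Vk t) = no_destr t"
| "no_destr (H t) = no_destr t"
| "no_destr (Enc t1 t2) = (no_destr t1 \<and> no_destr t2)"
| "no_destr (Aenc t1 t2) = (no_destr t1 \<and> no_destr t2)"
| "no_destr (Sign t1 t2) = (no_destr t1 \<and> no_destr t2)"
| "no_destr (Pair t1 t2) = (no_destr t1 \<and> no_destr t2)"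
| "no_destr (Pi1 t) = False"
| "no_destr (Pi2 t) = False"
| "no_destr (Dec t1 t2) = False"
| "no_destr (Adec t1 t2) = False"
| "no_destr (Checksign t1 t2) = False"
| "no_destr _ = True"

fun axvars :: "trm \<Rightarrow> nat set" where
  "axvars (AXv x) = {x}"
| "axvars (Pk t) = axvars t"
| "axvars (Vk t) = axvars t"
| "axvars (H t) = axvars t"
| "axvars (Enc t1 t2) = axvars t1 \<union> axvars t2"
| "axvars (Aenc t1 t2) = axvars t1 \<union> axvars t2"
| "axvars (Sign t1 t2) = axvars t1 \<union> axvars t2"
| "axvars (Pair t1 t2) = axvars t1 \<union> axvars t2"
| "axvars (Pi1 t) = axvars t"
| "axvars (Pi2 t) = axvars t"
| "axvars (Dec t1 t2) = axvars t1 \<union> axvars t2"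
| "axvars (Adec t1 t2) = axvars t1 \<union> axvars t2"
| "axvars (Checksign t1 t2) = axvars t1 \<union> axvars t2"
| "axvars _ = {}"

(* frames: partial maps from AX-variable indices to terms *)
type_synonym frame = "nat \<rightharpoonup> trm"

fun app_frame :: "trm \<Rightarrow> frame \<Rightarrow> trm" where
  "app_frame (AXv x) \<phi> = (case \<phi> x of Some t \<Rightarrow> t | None \<Rightarrow> AXv x)"
| "app_frame (Pk t) \<phi> = Pk (app_frame t \<phi>)"
| "app_frame (Vk t) \<phi> = Vk (app_frame t \<phi>)"
| "app_frame (H t) \<phi> = H (app_frame t \<phi>)"
| "app_frame (Enc t1 t2) \<phi> = Enc (app_frame t1 \<phi>) (app_frame t2 \<phi>)"
| "app_frame (Aenc t1 t2) \<phi> = Aenc (app_frame t1 \<phi>) (app_frame t2 \<phi>)"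
| "app_frame (Sign t1 t2) \<phi> = Sign (app_frame t1 \<phi>) (app_frame t2 \<phi>)"
| "app_frame (Pair t1 t2) \<phi> = Pair (app_frame t1 \<phi>) (app_frame t2 \<phi>)"
| "app_frame (Pi1 t) \<phi> = Pi1 (app_frame t \<phi>)"
| "app_frame (Pi2 t) \<phi> = Pi2 (app_frame t \<phi>)"
| "app_frame (Dec t1 t2) \<phi> = Dec (app_frame t1 \<phi>) (app_frame t2 \<phi>)"
| "app_frame (Adec t1 t2) \<phi> = Adec (app_frame t1 \<phi>) (app_frame t2 \<phi>)"
| "app_frame (Checksign t1 t2) \<phi> = Checksign (app_frame t1 \<phi>) (app_frame t2 \<phi>)"
| "app_frame t \<phi> = t"

(* labels; only the labels of the environment types matter *)
datatype label = LL | HL | HH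

(* environment: labels of the key types of keys and of the nonce types of nonces *)
record env =
  key_lab :: "nat \<rightharpoonup> label"
  nonce_lab :: "nm \<rightharpoonup> label"

definition wf_env :: "env \<Rightarrow> bool" where
  "wf_env \<Gamma> \<longleftrightarrow> finite (dom (key_lab \<Gamma>)) \<and> finite (dom (nonce_lab \<Gamma>))"

(* the set of terms forming the range of \<phi>^\<Gamma>_LL *)
definition LL_range :: "env \<Rightarrow> trm set" where
  "LL_range \<Gamma> =
     {K k | k. key_lab \<Gamma> k = Some LL}
   \<union> {Pk (K k) | k. k \<in> dom (key_lab \<Gamma>)}
   \<union> {Vk (K k) | k. k \<in> dom (key_lab \<Gamma>)}
   \<union> {Nm n | n. nonce_lab \<Gamma> n = Some LL}"

type_synonym constr = "trm \<times> trm"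

definition constraint_set :: "constr set \<Rightarrow> bool" where
  "constraint_set c \<longleftrightarrow> finite c \<and> (\<forall>(u, v) \<in> c. message u \<and> message v)"

(* \<phi>_l(c) and \<phi>_r(c) given the chosen bijection \<beta> from the domain D to c *)
definition phi_l :: "(nat \<Rightarrow> constr) \<Rightarrow> nat set \<Rightarrow> frame" where
  "phi_l \<beta> D = (\<lambda>x. if x \<in> D then Some (fst (\<beta> x)) else None)"

definition phi_r :: "(nat \<Rightarrow> constr) \<Rightarrow> nat set \<Rightarrow> frame" where
  "phi_r \<beta> D = (\<lambda>x. if x \<in> D then Some (snd (\<beta> x)) else None)"

inductive step :: "env \<Rightarrow> constr set \<times> constr set \<Rightarrow> constr set \<times> constr set \<Rightarrow> bool"
  for \<Gamma> :: env where
  pair: "step \<Gamma> (insert (Pair M N, Pair M' N') c, c') (insert (M, M') (insert (N, N') c), c')"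
| enc: "key_lab \<Gamma> k = Some LL \<Longrightarrow>
     step \<Gamma> (insert (Enc M (K k), Enc M' (K k)) c, c') (insert (M, M') c, c')"
| aenc: "key_lab \<Gamma> k = Some LL \<Longrightarrow>
     step \<Gamma> (insert (Aenc M (Pk (K k)), Aenc M' (Pk (K k))) c, c') (insert (M, M') c, c')"
| sign_LL: "key_lab \<Gamma> k = Some LL \<Longrightarrow>
     step \<Gamma> (insert (Sign M (K k), Sign M' (K k)) c, c') (insert (M, M') c, c')"
| sign_HH: "key_lab \<Gamma> k = Some HH \<Longrightarrow>
     step \<Gamma> (insert (Sign M (K k), Sign M' (K k)) c, c')
            (insert (M, M') c, insert (Sign M (K k), Sign M' (K k)) c')"

abbreviation steps :: "env \<Rightarrow> constr set \<times> constr set \<Rightarrow> constr set \<times> constr set \<Rightarrow> bool" where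
  "steps \<Gamma> \<equiv> (step \<Gamma>)\<^sup>*\<^sup>*"

end

theory Submission
  imports Defs
begin

text \<open>Deducibility of a pair of messages from the two initial frames is invariant along
  reduction: a step strips a pair, an encryption or signature under an LL key, or an HH
  signature, and the attacker undoes it with the matching destructor, taking the decryption or
  verification key from the LL frame. Conversely, each constraint removed by a step is rebuilt
  by the matching constructor from its components and a key of the LL frame, while an HH
  signature is kept in the second component; so the initial constraints are obtained from the
  final frames without destructors.\<close>

definition shared_entries :: "frame \<Rightarrow> frame \<Rightarrow> nat set \<Rightarrow> trm set" where
  "shared_entries FL FR S = {t. \<exists>y\<in>S. FL y = Some t \<and> FR y = Some t}"

definition deducible :: "frame \<Rightarrow> frame \<Rightarrow> nat set \<Rightarrow> constr \<Rightarrow> bool" where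
  "deducible FL FR S p \<longleftrightarrow> (\<exists>R. recipe R \<and> axvars R \<subseteq> S
     \<and> eval (app_frame R FL) = Some (fst p) \<and> eval (app_frame R FR) = Some (snd p))"

definition constructible :: "frame \<Rightarrow> frame \<Rightarrow> nat set \<Rightarrow> constr \<Rightarrow> bool" where
  "constructible FL FR S p \<longleftrightarrow> (\<exists>R. recipe R \<and> no_destr R \<and> axvars R \<subseteq> S
     \<and> app_frame R FL = fst p \<and> app_frame R FR = snd p)"

lemma eval_message: "message t \<Longrightarrow> eval t = Some t"
  by (induction t) auto

lemma deducible_shared_entry:
  assumes "t \<in> shared_entries FL FR S" and "message t"
  shows "deducible FL FR S (t, t)"
proof -
  obtain y where "y \<in> S" "FL y = Some t" "FR y = Some t"
    using assms(1) by (auto simp: shared_entries_def)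
  then show ?thesis
    unfolding deducible_def by (intro exI[of _ "AXv y"]) (simp add: eval_message assms(2))
qed

lemma constructible_shared_entry:
  assumes "t \<in> shared_entries FL FR S"
  shows "constructible FL FR S (t, t)"
proof -
  obtain y where "y \<in> S" "FL y = Some t" "FR y = Some t"
    using assms by (auto simp: shared_entries_def)
  then show ?thesis
    unfolding constructible_def by (intro exI[of _ "AXv y"]) simp
qed

lemma deducible_Pair_components:
  assumes "deducible FL FR S (Pair M N, Pair M' N')"
  shows "deducible FL FR S (M, M')" and "deducible FL FR S (N, N')"
proof -
  obtain R where R: "recipe R" "axvars R \<subseteq> S"
    "eval (app_frame R FL) = Some (Pair M N)" "eval (app_frame R FR) = Some (Pair M' N')"
    using assms unfolding deducible_def by auto
  show "deducible FL FR S (M, M')"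
    unfolding deducible_def by (intro exI[of _ "Pi1 R"]) (simp add: R)
  show "deducible FL FR S (N, N')"
    unfolding deducible_def by (intro exI[of _ "Pi2 R"]) (simp add: R)
qed

lemma deducible_Dec:
  assumes "deducible FL FR S (Enc M k, Enc M' k')" and "deducible FL FR S (k, k')"
  shows "deducible FL FR S (M, M')"
proof -
  obtain R Rk where "recipe R" "axvars R \<subseteq> S"
    "eval (app_frame R FL) = Some (Enc M k)" "eval (app_frame R FR) = Some (Enc M' k')"
    "recipe Rk" "axvars Rk \<subseteq> S"
    "eval (app_frame Rk FL) = Some k" "eval (app_frame Rk FR) = Some k'"
    using assms unfolding deducible_def by auto
  then show ?thesis
    unfolding deducible_def by (intro exI[of _ "Dec R Rk"]) simp
qed

lemma deducible_Adec:
  assumes "deducible FL FR S (Aenc M (Pk k), Aenc M' (Pk k'))" and "deducible FL FR S (k, k')"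
  shows "deducible FL FR S (M, M')"
proof -
  obtain R Rk where "recipe R" "axvars R \<subseteq> S"
    "eval (app_frame R FL) = Some (Aenc M (Pk k))" "eval (app_frame R FR) = Some (Aenc M' (Pk k'))"
    "recipe Rk" "axvars Rk \<subseteq> S"
    "eval (app_frame Rk FL) = Some k" "eval (app_frame Rk FR) = Some k'"
    using assms unfolding deducible_def by auto
  then show ?thesis
    unfolding deducible_def by (intro exI[of _ "Adec R Rk"]) simp
qed

lemma deducible_Checksign:
  assumes "deducible FL FR S (Sign M k, Sign M' k')" and "deducible FL FR S (Vk k, Vk k')"
  shows "deducible FL FR S (M, M')"
proof -
  obtain R Rk where "recipe R" "axvars R \<subseteq> S"
    "eval (app_frame R FL) = Some (Sign M k)" "eval (app_frame R FR) = Some (Sign M' k')"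
    "recipe Rk" "axvars Rk \<subseteq> S"
    "eval (app_frame Rk FL) = Some (Vk k)" "eval (app_frame Rk FR) = Some (Vk k')"
    using assms unfolding deducible_def by auto
  then show ?thesis
    unfolding deducible_def by (intro exI[of _ "Checksign R Rk"]) simp
qed

lemma constructible_binary:
  assumes "constructible FL FR S (M, M')" and "constructible FL FR S (N, N')"
  shows "constructible FL FR S (Pair M N, Pair M' N')"
    and "constructible FL FR S (Enc M N, Enc M' N')"
    and "constructible FL FR S (Aenc M N, Aenc M' N')"
    and "constructible FL FR S (Sign M N, Sign M' N')"
proof -
  obtain R1 R2 where R: "recipe R1" "no_destr R1" "axvars R1 \<subseteq> S"
    "app_frame R1 FL = M" "app_frame R1 FR = M'"
    "recipe R2" "no_destr R2" "axvars R2 \<subseteq> S"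
    "app_frame R2 FL = N" "app_frame R2 FR = N'"
    using assms unfolding constructible_def by auto
  show "constructible FL FR S (Pair M N, Pair M' N')"
    unfolding constructible_def by (intro exI[of _ "Pair R1 R2"]) (simp add: R)
  show "constructible FL FR S (Enc M N, Enc M' N')"
    unfolding constructible_def by (intro exI[of _ "Enc R1 R2"]) (simp add: R)
  show "constructible FL FR S (Aenc M N, Aenc M' N')"
    unfolding constructible_def by (intro exI[of _ "Aenc R1 R2"]) (simp add: R)
  show "constructible FL FR S (Sign M N, Sign M' N')"
    unfolding constructible_def by (intro exI[of _ "Sign R1 R2"]) (simp add: R)
qed

lemma LL_range_key_entries:
  "key_lab \<Gamma> k = Some LL \<Longrightarrow> K k \<in> LL_range \<Gamma>"
  "key_lab \<Gamma> k = Some l \<Longrightarrow> Pk (K k) \<in> LL_range \<Gamma>"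
  "key_lab \<Gamma> k = Some l \<Longrightarrow> Vk (K k) \<in> LL_range \<Gamma>"
  by (auto simp: LL_range_def)

lemma step_preserves_deducible:
  assumes "step \<Gamma> (c, c') (d, d')" and keys: "LL_range \<Gamma> \<subseteq> shared_entries FL FR S"
    and ded: "\<forall>p\<in>c \<union> c'. deducible FL FR S p"
  shows "\<forall>p\<in>d \<union> d'. deducible FL FR S p"
proof -
  have key: "deducible FL FR S (K k, K k)" if "key_lab \<Gamma> k = Some LL" for k
    using that by (intro deducible_shared_entry subsetD[OF keys] LL_range_key_entries) simp_all
  have vkey: "deducible FL FR S (Vk (K k), Vk (K k))" if "key_lab \<Gamma> k = Some l" for k l
    using that by (intro deducible_shared_entry subsetD[OF keys] LL_range_key_entries) simp_all
  from assms(1) show ?thesis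
  proof cases
    case (pair M N M' N' c0)
    then have "deducible FL FR S (Pair M N, Pair M' N')" using ded by simp
    then show ?thesis using pair ded by (auto dest: deducible_Pair_components)
  next
    case (enc k M M' c0)
    then have "deducible FL FR S (Enc M (K k), Enc M' (K k))" using ded by simp
    then have "deducible FL FR S (M, M')" using key[OF enc(4)] by (rule deducible_Dec)
    then show ?thesis using enc ded by simp
  next
    case (aenc k M M' c0)
    then have "deducible FL FR S (Aenc M (Pk (K k)), Aenc M' (Pk (K k)))" using ded by simp
    then have "deducible FL FR S (M, M')" using key[OF aenc(4)] by (rule deducible_Adec)
    then show ?thesis using aenc ded by simp
  next
    case (sign_LL k M M' c0)
    then have "deducible FL FR S (Sign M (K k), Sign M' (K k))" using ded by simp
    then have "deducible FL FR S (M, M')" using vkey[OF sign_LL(4)] by (rule deducible_Checksign)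
    then show ?thesis using sign_LL ded by simp
  next
    case (sign_HH k M M' c0)
    then have "deducible FL FR S (Sign M (K k), Sign M' (K k))" using ded by simp
    then have "deducible FL FR S (M, M')" using vkey[OF sign_HH(4)] by (rule deducible_Checksign)
    then show ?thesis using sign_HH ded by simp
  qed
qed

lemma steps_preserve_deducible:
  assumes "steps \<Gamma> (c, c') (d, d')" and "LL_range \<Gamma> \<subseteq> shared_entries FL FR S"
    and "\<forall>p\<in>c \<union> c'. deducible FL FR S p"
  shows "\<forall>p\<in>d \<union> d'. deducible FL FR S p"
  using assms(1,3)
  by (induction rule: rtranclp_induct2) (use step_preserves_deducible assms(2) in blast)+

lemma step_reflects_constructible:
  assumes "step \<Gamma> (c, c') (d, d')" and keys: "LL_range \<Gamma> \<subseteq> shared_entries FL FR S"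
    and con: "\<forall>p\<in>d \<union> d'. constructible FL FR S p"
  shows "\<forall>p\<in>c \<union> c'. constructible FL FR S p"
proof -
  have key: "constructible FL FR S (K k, K k)" if "key_lab \<Gamma> k = Some LL" for k
    using that by (intro constructible_shared_entry subsetD[OF keys] LL_range_key_entries) simp_all
  have pkey: "constructible FL FR S (Pk (K k), Pk (K k))" if "key_lab \<Gamma> k = Some l" for k l
    using that by (intro constructible_shared_entry subsetD[OF keys] LL_range_key_entries) simp_all
  from assms(1) show ?thesis
  proof cases
    case (pair M N M' N' c0)
    then have "constructible FL FR S (M, M')" "constructible FL FR S (N, N')" using con by simp_all
    then have "constructible FL FR S (Pair M N, Pair M' N')" by (rule constructible_binary(1))
    then show ?thesis using pair con by simp
  next
    case (enc k M M' c0)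
    then have "constructible FL FR S (M, M')" using con by simp
    then have "constructible FL FR S (Enc M (K k), Enc M' (K k))"
      using key[OF enc(4)] by (rule constructible_binary(2))
    then show ?thesis using enc con by simp
  next
    case (aenc k M M' c0)
    then have "constructible FL FR S (M, M')" using con by simp
    then have "constructible FL FR S (Aenc M (Pk (K k)), Aenc M' (Pk (K k)))"
      using pkey[OF aenc(4)] by (rule constructible_binary(3))
    then show ?thesis using aenc con by simp
  next
    case (sign_LL k M M' c0)
    then have "constructible FL FR S (M, M')" using con by simp
    then have "constructible FL FR S (Sign M (K k), Sign M' (K k))"
      using key[OF sign_LL(4)] by (rule constructible_binary(4))
    then show ?thesis using sign_LL con by simp
  next
    case sign_HH
    then show ?thesis using con by auto
  qed
qed

lemma steps_reflect_constructible:
  assumes "steps \<Gamma> (c, c') (d, d')" and "LL_range \<Gamma> \<subseteq> shared_entries FL FR S"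
    and "\<forall>p\<in>d \<union> d'. constructible FL FR S p"
  shows "\<forall>p\<in>c \<union> c'. constructible FL FR S p"
  using assms(1,3)
  by (induction rule: converse_rtranclp_induct2) (use step_reflects_constructible assms(2) in blast)+

lemma dom_phi_l [simp]: "dom (phi_l \<beta> D) = D"
  by (auto simp: phi_l_def split: if_splits)

lemma dom_phi_r [simp]: "dom (phi_r \<beta> D) = D"
  by (auto simp: phi_r_def split: if_splits)

lemma ran_subset_shared_entries:
  assumes "dom \<psi> \<inter> dom \<phi> = {}" and "dom \<psi>' \<inter> dom \<phi> = {}" and "dom \<phi> \<subseteq> S"
  shows "ran \<phi> \<subseteq> shared_entries (\<phi> ++ \<psi>) (\<phi> ++ \<psi>') S"
proof
  fix t assume "t \<in> ran \<phi>"
  then obtain y where "\<phi> y = Some t" by (auto simp: ran_def)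
  moreover from this have "y \<notin> dom \<psi>" "y \<notin> dom \<psi>'" "y \<in> S"
    using assms by auto
  ultimately show "t \<in> shared_entries (\<phi> ++ \<psi>) (\<phi> ++ \<psi>') S"
    unfolding shared_entries_def by (auto simp: map_add_def split: option.split)
qed

lemma constraints_deducible_in_own_frames:
  assumes "c \<subseteq> \<beta> ` D" and "constraint_set c" and "D \<inter> dom \<phi> = {}"
  shows "\<forall>p\<in>c. deducible (\<phi> ++ phi_l \<beta> D) (\<phi> ++ phi_r \<beta> D) (dom \<phi> \<union> D) p"
proof
  fix p assume p: "p \<in> c"
  then obtain y where "y \<in> D" "\<beta> y = p" using assms(1) by auto
  moreover have "message (fst p)" "message (snd p)"
    using p assms(2) by (auto simp: constraint_set_def)
  ultimately show "deducible (\<phi> ++ phi_l \<beta> D) (\<phi> ++ phi_r \<beta> D) (dom \<phi> \<union> D) p"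
    unfolding deducible_def
    by (intro exI[of _ "AXv y"]) (simp add: eval_message phi_l_def phi_r_def)
qed

lemma constraints_constructible_in_own_frames:
  assumes "c \<subseteq> \<beta> ` D"
  shows "\<forall>p\<in>c. constructible (\<phi> ++ phi_l \<beta> D) (\<phi> ++ phi_r \<beta> D) (dom \<phi> \<union> D) p"
proof
  fix p assume "p \<in> c"
  then obtain y where "y \<in> D" "\<beta> y = p" using assms by auto
  then show "constructible (\<phi> ++ phi_l \<beta> D) (\<phi> ++ phi_r \<beta> D) (dom \<phi> \<union> D) p"
    unfolding constructible_def
    by (intro exI[of _ "AXv y"]) (simp add: phi_l_def phi_r_def)
qed

lemma frame_entry_deducible:
  assumes "\<forall>p\<in>c. deducible FL FR S p" and "\<beta> ` D \<subseteq> c" and "x \<in> dom (phi_l \<beta> D)"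
  shows "\<exists>R. recipe R \<and> axvars R \<subseteq> S
           \<and> phi_l \<beta> D x = eval (app_frame R FL) \<and> phi_r \<beta> D x = eval (app_frame R FR)"
proof -
  have "x \<in> D" "\<beta> x \<in> c" using assms(2,3) by auto
  moreover obtain R where "recipe R" "axvars R \<subseteq> S"
    "eval (app_frame R FL) = Some (fst (\<beta> x))" "eval (app_frame R FR) = Some (snd (\<beta> x))"
    using assms(1) \<open>\<beta> x \<in> c\<close> unfolding deducible_def by blast
  ultimately show ?thesis by (auto simp: phi_l_def phi_r_def)
qed

lemma frame_entry_constructible:
  assumes "\<forall>p\<in>c. constructible FL FR S p" and "\<beta> ` D \<subseteq> c" and "x \<in> dom (phi_l \<beta> D)"
  shows "\<exists>R. recipe R \<and> no_destr R \<and> axvars R \<subseteq> S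
           \<and> phi_l \<beta> D x = Some (app_frame R FL) \<and> phi_r \<beta> D x = Some (app_frame R FR)"
proof -
  have "x \<in> D" "\<beta> x \<in> c" using assms(2,3) by auto
  moreover obtain R where "recipe R" "no_destr R" "axvars R \<subseteq> S"
    "app_frame R FL = fst (\<beta> x)" "app_frame R FR = snd (\<beta> x)"
    using assms(1) \<open>\<beta> x \<in> c\<close> unfolding constructible_def by blast
  ultimately show ?thesis by (auto simp: phi_l_def phi_r_def)
qed

theorem lemmaB39:
  fixes \<Gamma> :: env and c1 c2 c1' c2' :: "constr set"
    and \<phi>LL :: frame
    and \<beta> \<beta>' :: "nat \<Rightarrow> constr" and D D' :: "nat set"
  assumes "wf_env \<Gamma>"
    and "finite (dom \<phi>LL)" and "ran \<phi>LL = LL_range \<Gamma>"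
    and "constraint_set c1" and "constraint_set c2"
    and "constraint_set c1'" and "constraint_set c2'"
    and "bij_betw \<beta> D (c1 \<union> c2)" and "D \<inter> dom \<phi>LL = {}"
    and "bij_betw \<beta>' D' (c1' \<union> c2')" and "D' \<inter> dom \<phi>LL = {}"
    and "steps \<Gamma> (c1, c2) (c1', c2')"
  shows "(\<forall>x \<in> dom (phi_l \<beta>' D'). \<exists>R. recipe R
            \<and> axvars R \<subseteq> dom (\<phi>LL ++ phi_l \<beta> D)
            \<and> phi_l \<beta>' D' x = eval (app_frame R (\<phi>LL ++ phi_l \<beta> D))
            \<and> phi_r \<beta>' D' x = eval (app_frame R (\<phi>LL ++ phi_r \<beta> D)))
       \<and> (\<forall>x \<in> dom (phi_l \<beta> D). \<exists>R. recipe R \<and> no_destr R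
            \<and> axvars R \<subseteq> dom (\<phi>LL ++ phi_l \<beta>' D')
            \<and> phi_l \<beta> D x = Some (app_frame R (\<phi>LL ++ phi_l \<beta>' D'))
            \<and> phi_r \<beta> D x = Some (app_frame R (\<phi>LL ++ phi_r \<beta>' D')))"
proof -
  have keys: "LL_range \<Gamma> \<subseteq> shared_entries (\<phi>LL ++ phi_l \<gamma> E) (\<phi>LL ++ phi_r \<gamma> E) (dom \<phi>LL \<union> E)"
    if "E \<inter> dom \<phi>LL = {}" for \<gamma> E
    using ran_subset_shared_entries[of "phi_l \<gamma> E" \<phi>LL "phi_r \<gamma> E"] that assms(3) by auto
  have dom_frame: "dom (\<phi>LL ++ phi_l \<gamma> E) = dom \<phi>LL \<union> E" for \<gamma> E
    by auto
  have img: "\<beta> ` D = c1 \<union> c2" "\<beta>' ` D' = c1' \<union> c2'"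
    using assms(8,10) by (simp_all add: bij_betw_imp_surj_on)
  have "constraint_set (c1 \<union> c2)"
    using assms(4,5) by (auto simp: constraint_set_def)
  then have "\<forall>p\<in>c1 \<union> c2. deducible (\<phi>LL ++ phi_l \<beta> D) (\<phi>LL ++ phi_r \<beta> D) (dom \<phi>LL \<union> D) p"
    using constraints_deducible_in_own_frames img(1) assms(9) by blast
  then have "\<forall>p\<in>c1' \<union> c2'. deducible (\<phi>LL ++ phi_l \<beta> D) (\<phi>LL ++ phi_r \<beta> D) (dom \<phi>LL \<union> D) p"
    using steps_preserve_deducible[OF assms(12) keys[OF assms(9)]] by blast
  then have forward: "\<forall>x \<in> dom (phi_l \<beta>' D'). \<exists>R. recipe R \<and> axvars R \<subseteq> dom \<phi>LL \<union> D
      \<and> phi_l \<beta>' D' x = eval (app_frame R (\<phi>LL ++ phi_l \<beta> D))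
      \<and> phi_r \<beta>' D' x = eval (app_frame R (\<phi>LL ++ phi_r \<beta> D))"
    using frame_entry_deducible img(2) by blast
  have "\<forall>p\<in>c1' \<union> c2'.
      constructible (\<phi>LL ++ phi_l \<beta>' D') (\<phi>LL ++ phi_r \<beta>' D') (dom \<phi>LL \<union> D') p"
    using constraints_constructible_in_own_frames img(2) by blast
  then have "\<forall>p\<in>c1 \<union> c2.
      constructible (\<phi>LL ++ phi_l \<beta>' D') (\<phi>LL ++ phi_r \<beta>' D') (dom \<phi>LL \<union> D') p"
    using steps_reflect_constructible[OF assms(12) keys[OF assms(11)]] by blast
  then have backward: "\<forall>x \<in> dom (phi_l \<beta> D). \<exists>R. recipe R \<and> no_destr R
      \<and> axvars R \<subseteq> dom \<phi>LL \<union> D'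
      \<and> phi_l \<beta> D x = Some (app_frame R (\<phi>LL ++ phi_l \<beta>' D'))
      \<and> phi_r \<beta> D x = Some (app_frame R (\<phi>LL ++ phi_r \<beta>' D'))"
    using frame_entry_constructible img(1) by blast
  show ?thesis
    unfolding dom_frame using forward backward by blast
qed

end
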